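(* Let $\varepsilon\in\{\pm1\}$ and let $(c_1,\dots,c_m)\in\mathbb{Z}^m$ be an $\varepsilon$-cycle. Indices are read cyclically modulo $m$. Then at least one of the following holds: (0) $m=2$ and $(c_1,c_2)=(0,0)$; (1) there is $k$ with $c_k=1$ such that $(c_1,\dots,c_{k-2},c_{k-1}-1,c_{k+1}-1,c_{k+2},\dots,c_m)$ is an $\varepsilon$-cycle of length $m-1$; (2) there is $k$ with $c_k=0$ such that $(c_1,\dots,c_{k-2},c_{k-1}+c_{k+1},c_{k+2},\dots,c_m)$ is a $(-\varepsilon)$-cycle of length $m-2$; (3) there is $k$ with $c_k=-1$ such that $(c_1,\dots,c_{k-2},c_{k-1}+1,c_{k+1}+1,c_{k+2},\dots,c_m)$ is a $(-\varepsilon)$-cycle of length $m-1$.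
   Context: $\eta(c)=\begin{pmatrix}c&-1\\1&0\end{pmatrix}$. For $\varepsilon\in\{\pm1\}$, an $\varepsilon$-cycle is a sequence $(c_1,\dots,c_m)\in\mathbb{Z}^m$ with $\eta(c_1)\cdots\eta(c_m)=\varepsilon I$. *)

theory Defs
  imports "HOL-Analysis.Analysis"
begin

definition eta :: "int \<Rightarrow> int^2^2" where
  "eta c = vector [vector [c, -1], vector [1, 0]]"

definition eta_prod :: "int list \<Rightarrow> int^2^2" where
  "eta_prod cs = foldr (\<lambda>c M. eta c ** M) cs (mat 1)"

definition is_cycle :: "int \<Rightarrow> int list \<Rightarrow> bool" where
  "is_cycle e cs \<longleftrightarrow> eta_prod cs = mat e"

text \<open>Cyclic reductions at the (0-based) position k.  With rest = [c_{k+1},...,c_{k-1}]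
  (cyclic, 1-based indices in the comment), the rotated reduced sequence is
  [c_{k+1}+d, c_{k+2},...,c_{k-2}, c_{k-1}+d]; rotating it back gives literally
  (c_1,...,c_{k-2}, c_{k-1}+d, c_{k+1}+d, c_{k+2},...,c_m).\<close>
definition red_pm :: "int \<Rightarrow> int list \<Rightarrow> nat \<Rightarrow> int list" where
  "red_pm d cs k = (let m = length cs; rest = tl (rotate k cs) in
     rotate (m - 1 - k) ((hd rest + d) # butlast (tl rest) @ [last rest + d]))"

text \<open>Literally (c_1,...,c_{k-2}, c_{k-1}+c_{k+1}, c_{k+2},...,c_m), indices cyclic.\<close>
definition red_zero :: "int list \<Rightarrow> nat \<Rightarrow> int list" where
  "red_zero cs k = (let m = length cs; rest = tl (rotate k cs) in
     rotate (m - 1 - k) ((last rest + hd rest) # butlast (tl rest)))"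

end

theory Submission
  imports Defs
begin

text \<open>If every entry satisfies |c| \<ge> 2, the first column (a, b) of
  eta(c) M is (c a - b, a), so |a| > |b| propagates along the product and the
  lower-left entry of a product of length at least 1 cannot vanish; hence a cycle
  has an entry c_k in {-1, 0, 1}.  Rotating it to the front, the identities
  eta(y) eta(1) eta(x) = eta(y-1) eta(x-1), eta(y) eta(0) eta(x) = -eta(y+x) and
  eta(y) eta(-1) eta(x) = -eta(y+1) eta(x+1) shorten the cycle.  Cycles of length
  1 do not exist and the only one of length 2 is (0, 0).\<close>

lemma mat_mult_commute:
  fixes A :: "'a::comm_semiring_1^'m^'n"
  shows "mat k ** A = A ** mat k"
  by (simp add: vec_eq_iff matrix_matrix_mult_def mat_def if_distrib if_distribR
      sum.delta' mult.commute cong: if_cong)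

lemma mult_eq_mat_commute:
  fixes A B N :: "'a::comm_semiring_1^'n^'n"
  assumes "N ** A = mat 1" and "A ** B = mat k"
  shows "B ** A = mat k"
proof -
  have "B = N ** mat k"
    by (metis assms matrix_mul_assoc matrix_mul_lid)
  then have "B ** A = N ** (mat k ** A)"
    by (simp add: matrix_mul_assoc)
  also have "\<dots> = (N ** A) ** mat k"
    by (simp add: mat_mult_commute matrix_mul_assoc)
  finally show ?thesis
    using assms(1) by simp
qed

lemma eta_left_invertible: "\<exists>N. N ** eta c = mat 1"
  by (rule exI[of _ "vector [vector [0, 1], vector [-1, c]]"])
     (simp add: vec_eq_iff forall_2 matrix_matrix_mult_def sum_2 mat_def eta_def)

lemma eta_prod_Nil [simp]: "eta_prod [] = mat 1"
  and eta_prod_Cons [simp]: "eta_prod (c # cs) = eta c ** eta_prod cs"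
  by (simp_all add: eta_prod_def)

lemma eta_prod_append: "eta_prod (xs @ ys) = eta_prod xs ** eta_prod ys"
  by (induction xs) (simp_all add: matrix_mul_assoc)

lemma is_cycle_rotate1: "is_cycle e cs \<Longrightarrow> is_cycle e (rotate1 cs)"
proof (cases cs)
  case (Cons c cs')
  assume "is_cycle e cs"
  then have "eta c ** eta_prod cs' = mat e"
    using Cons by (simp add: is_cycle_def)
  moreover obtain N where "N ** eta c = mat 1"
    using eta_left_invertible by blast
  ultimately have "eta_prod cs' ** eta c = mat e"
    using mult_eq_mat_commute by blast
  then show ?thesis
    using Cons by (simp add: is_cycle_def eta_prod_append)
qed simp

lemma is_cycle_rotate: "is_cycle e cs \<Longrightarrow> is_cycle e (rotate n cs)"
  by (induction n) (simp_all add: is_cycle_rotate1)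

lemma is_cycle_last_to_front: "is_cycle e (cs @ [c]) \<Longrightarrow> is_cycle e (c # cs)"
  using is_cycle_rotate[of e "cs @ [c]" "length cs"] by (simp add: rotate_append)

lemma abs_eta_prod_21_less_11:
  "\<forall>c\<in>set cs. \<bar>c\<bar> \<ge> 2 \<Longrightarrow> \<bar>eta_prod cs $ 2 $ 1\<bar> < \<bar>eta_prod cs $ 1 $ 1\<bar>"
proof (induction cs)
  case Nil
  then show ?case by (simp add: mat_def)
next
  case (Cons c cs)
  let ?a = "eta_prod cs $ 1 $ 1" and ?b = "eta_prod cs $ 2 $ 1"
  have col: "eta_prod (c # cs) $ 1 $ 1 = c * ?a - ?b" "eta_prod (c # cs) $ 2 $ 1 = ?a"
    by (simp_all add: matrix_matrix_mult_def sum_2 eta_def)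
  have "\<bar>c\<bar> \<ge> 2" "\<bar>?b\<bar> < \<bar>?a\<bar>"
    using Cons by auto
  then have "2 * \<bar>?a\<bar> \<le> \<bar>c * ?a\<bar>"
    by (simp add: abs_mult mult_right_mono)
  with \<open>\<bar>?b\<bar> < \<bar>?a\<bar>\<close> have "\<bar>?a\<bar> < \<bar>c * ?a - ?b\<bar>"
    using abs_triangle_ineq2[of "c * ?a" ?b] by linarith
  then show ?case
    unfolding col .
qed

lemma is_cycle_has_small_entry:
  assumes "is_cycle e cs" and "cs \<noteq> []"
  obtains k where "k < length cs" and "\<bar>cs ! k\<bar> \<le> 1"
proof (rule ccontr)
  assume none: "\<not> thesis"
  obtain c cs' where cs: "cs = c # cs'"
    using \<open>cs \<noteq> []\<close> by (cases cs) auto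
  have "\<forall>c\<in>set cs. \<bar>c\<bar> \<ge> 2"
    using that none by (fastforce simp: in_set_conv_nth)
  then have "\<bar>eta_prod cs' $ 2 $ 1\<bar> < \<bar>eta_prod cs' $ 1 $ 1\<bar>"
    using cs abs_eta_prod_21_less_11 by simp
  then have "eta_prod cs $ 2 $ 1 \<noteq> 0"
    using cs by (simp add: matrix_matrix_mult_def sum_2 eta_def)
  then show False
    using assms(1) by (simp add: is_cycle_def mat_def)
qed

lemma not_is_cycle_singleton: "\<not> is_cycle e [c]"
proof
  assume "is_cycle e [c]"
  then have "eta c $ 1 $ 2 = (mat e :: int^2^2) $ 1 $ 2"
    by (simp add: is_cycle_def)
  then show False
    by (simp add: eta_def mat_def)
qed

lemma is_cycle_pair: "is_cycle e [a, b] \<Longrightarrow> a = 0 \<and> b = 0"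
  by (simp add: is_cycle_def vec_eq_iff forall_2 matrix_matrix_mult_def sum_2 eta_def mat_def)

lemma is_cycle_short:
  assumes "is_cycle e cs" and "1 \<le> length cs" and "length cs \<le> 2"
  shows "cs = [0, 0]"
proof -
  have "length cs = 1 \<or> length cs = 2"
    using assms(2,3) by linarith
  then consider c where "cs = [c]" | a b where "cs = [a, b]"
    by (metis One_nat_def Suc_1 length_0_conv length_Suc_conv)
  then show ?thesis
    using assms(1) not_is_cycle_singleton is_cycle_pair by cases auto
qed

lemma eta_triple_1: "eta y ** eta 1 ** eta x = eta (y - 1) ** eta (x - 1)"
  and eta_triple_0: "eta y ** eta 0 ** eta x = mat (-1) ** eta (y + x)"
  and eta_triple_minus_1: "eta y ** eta (-1) ** eta x = mat (-1) ** (eta (y + 1) ** eta (x + 1))"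
  by (simp_all add: vec_eq_iff forall_2 matrix_matrix_mult_def sum_2 mat_def eta_def algebra_simps)

lemma mat_minus_1_mult_eq_mat: "mat (-1) ** A = mat e \<Longrightarrow> A = (mat (-e) :: int^2^2)"
  by (simp add: vec_eq_iff forall_2 matrix_matrix_mult_def sum_2 mat_def algebra_simps)

lemma eta_prod_triple:
  "eta_prod (y # c # x # mid) = (eta y ** eta c ** eta x) ** eta_prod mid"
  by (simp add: matrix_mul_assoc)

lemma is_cycle_reduce_1:
  "is_cycle e (1 # x # mid @ [y]) \<Longrightarrow> is_cycle e ((x - 1) # mid @ [y - 1])"
proof -
  assume "is_cycle e (1 # x # mid @ [y])"
  then have "is_cycle e (y # 1 # x # mid)"
    using is_cycle_last_to_front[of e "1 # x # mid"] by simp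
  then have "is_cycle e ((y - 1) # (x - 1) # mid)"
    by (simp add: is_cycle_def eta_prod_triple eta_triple_1 matrix_mul_assoc)
  then show ?thesis
    using is_cycle_rotate1 by fastforce
qed

lemma is_cycle_reduce_0:
  "is_cycle e (0 # x # mid @ [y]) \<Longrightarrow> is_cycle (-e) ((y + x) # mid)"
proof -
  assume "is_cycle e (0 # x # mid @ [y])"
  then have "is_cycle e (y # 0 # x # mid)"
    using is_cycle_last_to_front[of e "0 # x # mid"] by simp
  then have "mat (-1) ** eta_prod ((y + x) # mid) = mat e"
    by (simp add: is_cycle_def eta_prod_triple eta_triple_0 matrix_mul_assoc)
  then show ?thesis
    by (simp add: is_cycle_def mat_minus_1_mult_eq_mat)
qed

lemma is_cycle_reduce_minus_1:
  "is_cycle e (-1 # x # mid @ [y]) \<Longrightarrow> is_cycle (-e) ((x + 1) # mid @ [y + 1])"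
proof -
  assume "is_cycle e (-1 # x # mid @ [y])"
  then have "is_cycle e (y # -1 # x # mid)"
    using is_cycle_last_to_front[of e "-1 # x # mid"] by simp
  then have "mat (-1) ** eta_prod ((y + 1) # (x + 1) # mid) = mat e"
    by (simp add: is_cycle_def eta_prod_triple eta_triple_minus_1 matrix_mul_assoc)
  then have "is_cycle (-e) ((y + 1) # (x + 1) # mid)"
    by (simp add: is_cycle_def mat_minus_1_mult_eq_mat)
  then show ?thesis
    using is_cycle_rotate1 by fastforce
qed

lemma rotate_split_at:
  assumes "k < length cs" and "length cs \<ge> 3"
  obtains x mid y where "rotate k cs = cs ! k # x # mid @ [y]"
proof -
  have "\<exists>c x t. r = c # x # t \<and> t \<noteq> []" if "length r \<ge> 3" for r :: "'a list"
    using that by (auto simp: Suc_le_length_iff numeral_3_eq_3)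
  then obtain c x t where "rotate k cs = c # x # t" and "t \<noteq> []"
    using assms(2) by (metis length_rotate)
  moreover obtain mid y where "t = mid @ [y]"
    using \<open>t \<noteq> []\<close> rev_exhaust by blast
  moreover have "hd (rotate k cs) = cs ! k"
    using assms(1) hd_rotate_conv_nth[of cs k] by (cases cs) simp_all
  ultimately show ?thesis
    using that by simp
qed

lemma red_pm_rotate_split:
  "rotate k cs = c # x # mid @ [y] \<Longrightarrow>
    red_pm d cs k = rotate (length cs - 1 - k) ((x + d) # mid @ [y + d])"
  by (simp add: red_pm_def)

lemma red_zero_rotate_split:
  "rotate k cs = c # x # mid @ [y] \<Longrightarrow>
    red_zero cs k = rotate (length cs - 1 - k) ((y + x) # mid)"
  by (simp add: red_zero_def)

lemma length_rotate_split:
  "rotate k cs = c # x # mid @ [y] \<Longrightarrow> length cs = length mid + 3"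
proof -
  assume "rotate k cs = c # x # mid @ [y]"
  then have "length (rotate k cs) = length mid + 3"
    by simp
  then show ?thesis
    by simp
qed

lemma length_red_pm:
  assumes "k < length cs" and "length cs \<ge> 3"
  shows "length (red_pm d cs k) = length cs - 1"
proof -
  obtain x mid y where split: "rotate k cs = cs ! k # x # mid @ [y]"
    using rotate_split_at[OF assms] .
  then show ?thesis
    using length_rotate_split[OF split] by (simp add: red_pm_rotate_split)
qed

lemma length_red_zero:
  assumes "k < length cs" and "length cs \<ge> 3"
  shows "length (red_zero cs k) = length cs - 2"
proof -
  obtain x mid y where split: "rotate k cs = cs ! k # x # mid @ [y]"
    using rotate_split_at[OF assms] .
  then show ?thesis
    using length_rotate_split[OF split] by (simp add: red_zero_rotate_split)
qed

lemma is_cycle_red_pm_minus_1: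
  assumes "is_cycle e cs" and "k < length cs" and "length cs \<ge> 3" and "cs ! k = 1"
  shows "is_cycle e (red_pm (-1) cs k)"
proof -
  obtain x mid y where split: "rotate k cs = 1 # x # mid @ [y]"
    by (rule rotate_split_at[OF assms(2,3), unfolded assms(4)])
  have "is_cycle e (1 # x # mid @ [y])"
    unfolding split[symmetric] by (rule is_cycle_rotate[OF assms(1)])
  then show ?thesis
    unfolding red_pm_rotate_split[OF split] using is_cycle_reduce_1 is_cycle_rotate by simp
qed

lemma is_cycle_red_zero:
  assumes "is_cycle e cs" and "k < length cs" and "length cs \<ge> 3" and "cs ! k = 0"
  shows "is_cycle (-e) (red_zero cs k)"
proof -
  obtain x mid y where split: "rotate k cs = 0 # x # mid @ [y]"
    by (rule rotate_split_at[OF assms(2,3), unfolded assms(4)])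
  have "is_cycle e (0 # x # mid @ [y])"
    unfolding split[symmetric] by (rule is_cycle_rotate[OF assms(1)])
  then show ?thesis
    unfolding red_zero_rotate_split[OF split] using is_cycle_reduce_0 is_cycle_rotate by simp
qed

lemma is_cycle_red_pm_1:
  assumes "is_cycle e cs" and "k < length cs" and "length cs \<ge> 3" and "cs ! k = -1"
  shows "is_cycle (-e) (red_pm 1 cs k)"
proof -
  obtain x mid y where split: "rotate k cs = -1 # x # mid @ [y]"
    by (rule rotate_split_at[OF assms(2,3), unfolded assms(4)])
  have "is_cycle e (-1 # x # mid @ [y])"
    unfolding split[symmetric] by (rule is_cycle_rotate[OF assms(1)])
  then show ?thesis
    unfolding red_pm_rotate_split[OF split] using is_cycle_reduce_minus_1 is_cycle_rotate by simp
qed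

theorem theorem6p2:
  fixes e :: int and cs :: "int list"
  assumes "e = 1 \<or> e = -1"
    and "length cs \<ge> 1"
    and "is_cycle e cs"
  shows "(length cs = 2 \<and> cs = [0, 0])
    \<or> (\<exists>k < length cs. cs ! k = 1 \<and> length (red_pm (-1) cs k) = length cs - 1
          \<and> is_cycle e (red_pm (-1) cs k))
    \<or> (\<exists>k < length cs. cs ! k = 0 \<and> length (red_zero cs k) = length cs - 2
          \<and> is_cycle (-e) (red_zero cs k))
    \<or> (\<exists>k < length cs. cs ! k = -1 \<and> length (red_pm 1 cs k) = length cs - 1
          \<and> is_cycle (-e) (red_pm 1 cs k))"
proof (cases "length cs \<le> 2")
  case True
  then have "cs = [0, 0]"
    using is_cycle_short assms(2,3) by blast
  then show ?thesis
    by simp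
next
  case False
  then have long: "length cs \<ge> 3"
    by simp
  obtain k where k: "k < length cs" "\<bar>cs ! k\<bar> \<le> 1"
    using is_cycle_has_small_entry[OF assms(3)] long by (metis list.size(3) not_numeral_le_zero)
  then consider "cs ! k = 1" | "cs ! k = 0" | "cs ! k = -1"
    by linarith
  then show ?thesis
  proof cases
    case 1
    then show ?thesis
      using k(1) long assms(3) length_red_pm is_cycle_red_pm_minus_1 by blast
  next
    case 2
    then show ?thesis
      using k(1) long assms(3) length_red_zero is_cycle_red_zero by blast
  next
    case 3
    then show ?thesis
      using k(1) long assms(3) length_red_pm is_cycle_red_pm_1 by blast
  qed
qed

end
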